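(* Let $k \geq 1$ and let $G$ be a graph that has the maximum atom-bond connectivity index among all graphs with $n$ vertices and vertex-connectivity $k$. Then $G \cong K_n(k)$.
   Context: All graphs are simple and undirected. For a graph $G$ and a vertex $v$, $d(v)$ denotes the degree of $v$. The atom-bond connectivity (ABC) index is ${\rm ABC}(G)=\sum_{uv\in E(G)} \sqrt{\frac{d(u)+d(v)-2}{d(u)d(v)}}$. For graphs $G,H$ on disjoint vertex sets, $G+H$ is their disjoint union, and the join $G\vee H$ is the graph on $V(G)\cup V(H)$ with edge set $E(G)\cup E(H)\cup\{uv: u\in V(G), v\in V(H)\}$. $K_n(k)$ denotes the graph $K_k \vee (K_1 + K_{n-k-1})$, i.e., the graph obtained from $K_{n-1}$ by adding one new vertex joined to exactly $k$ vertices of $K_{n-1}$. *)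

theory Defs
  imports Complex_Main
begin

definition simple_graph :: "'a set \<Rightarrow> ('a \<Rightarrow> 'a \<Rightarrow> bool) \<Rightarrow> bool" where
  "simple_graph V E \<longleftrightarrow> finite V \<and> (\<forall>u v. E u v \<longrightarrow> u \<in> V \<and> v \<in> V)
     \<and> (\<forall>u v. E u v \<longrightarrow> E v u) \<and> (\<forall>v. \<not> E v v)"

definition degree :: "'a set \<Rightarrow> ('a \<Rightarrow> 'a \<Rightarrow> bool) \<Rightarrow> 'a \<Rightarrow> nat" where
  "degree V E v = card {u \<in> V. E v u}"

text \<open>ABC index: sum over (unordered) edges uv of sqrt((d(u)+d(v)-2)/(d(u)d(v))).
Each unordered edge is counted twice as an ordered pair, hence the factor 1/2.\<close>
definition ABC :: "'a set \<Rightarrow> ('a \<Rightarrow> 'a \<Rightarrow> bool) \<Rightarrow> real" where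
  "ABC V E = (\<Sum>(u, v) \<in> {(u, v). u \<in> V \<and> v \<in> V \<and> E u v}.
      sqrt ((real (degree V E u) + real (degree V E v) - 2)
            / (real (degree V E u) * real (degree V E v)))) / 2"

definition connected_on :: "'a set \<Rightarrow> ('a \<Rightarrow> 'a \<Rightarrow> bool) \<Rightarrow> bool" where
  "connected_on W E \<longleftrightarrow> W \<noteq> {} \<and>
     (\<forall>u\<in>W. \<forall>v\<in>W. (\<lambda>x y. E x y \<and> x \<in> W \<and> y \<in> W)\<^sup>*\<^sup>* u v)"

text \<open>Vertex connectivity: minimum number of vertices whose removal leaves a
disconnected graph or a graph with at most one vertex (so kappa(K_n) = n-1).\<close>
definition vertex_connectivity :: "'a set \<Rightarrow> ('a \<Rightarrow> 'a \<Rightarrow> bool) \<Rightarrow> nat" where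
  "vertex_connectivity V E = (LEAST k. \<exists>S \<subseteq> V. card S = k \<and>
      (\<not> connected_on (V - S) E \<or> card (V - S) \<le> 1))"

text \<open>K_n(k) on vertex set {0..<n}: K_{n-1} on {0..<n-1} plus vertex n-1 joined
to exactly the k vertices 0..k-1.\<close>
definition Knk :: "nat \<Rightarrow> nat \<Rightarrow> nat \<Rightarrow> nat \<Rightarrow> bool" where
  "Knk n k u v \<longleftrightarrow> u < n \<and> v < n \<and> u \<noteq> v \<and>
     (u = n - 1 \<longrightarrow> v < k) \<and> (v = n - 1 \<longrightarrow> u < k)"

definition graph_iso :: "'a set \<Rightarrow> ('a \<Rightarrow> 'a \<Rightarrow> bool) \<Rightarrow> 'b set \<Rightarrow> ('b \<Rightarrow> 'b \<Rightarrow> bool) \<Rightarrow> bool" where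
  "graph_iso V E W F \<longleftrightarrow> (\<exists>f. bij_betw f V W \<and> (\<forall>u\<in>V. \<forall>v\<in>V. E u v \<longleftrightarrow> F (f u) (f v)))"

end

theory Submission
  imports Defs
begin

text \<open>Let T be a minimum separating set of G, A the vertex set of one component of G - T and
  B the remaining vertices outside T. Then G is a spanning subgraph of \<open>K\<^sub>T \<or> (K\<^sub>A + K\<^sub>B)\<close>,
  and adding an edge to a graph without isolated vertices strictly increases the ABC index: the
  new edge weighs more than all the old edges at its two endpoints lose. With |T| = k and
  |A| + |B| fixed, the ABC index of \<open>K\<^sub>T \<or> (K\<^sub>A + K\<^sub>B)\<close> is, up to a constant, a sum of two
  values of a function that is strictly convex in the degree, so it is at most that of
  \<open>K\<^sub>n(k) = K\<^sub>T \<or> (K\<^sub>1 + K\<^sub>n\<^sub>-\<^sub>k\<^sub>-\<^sub>1)\<close>, with equality only if |A| = 1 or |B| = 1. As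
  \<open>K\<^sub>n(k)\<close> has vertex connectivity k, a maximal G is \<open>K\<^sub>T \<or> (K\<^sub>A + K\<^sub>B)\<close> with |A| = 1 or
  |B| = 1.\<close>

section \<open>The edge weight\<close>

definition abc_weight :: "real \<Rightarrow> real \<Rightarrow> real" where
  "abc_weight x y = sqrt ((x + y - 2) / (x * y))"

lemma abc_weight_radicand:
  fixes x y :: real
  assumes "x \<noteq> 0" "y \<noteq> 0"
  shows "(x + y - 2) / (x * y) = 1/x + 1/y - 2 * (1/x) * (1/y)"
  using assms by (simp add: field_simps)

lemma abc_weight_commute: "abc_weight x y = abc_weight y x"
  unfolding abc_weight_def by (simp add: add.commute mult.commute)

lemma sqrt_add_mult_square_le:
  fixes a b p r :: real
  assumes ab: "b \<le> a" "0 \<le> b" and p: "p \<ge> 0" and r: "r \<le> 1"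
  shows "sqrt (p + r*a^2) \<le> sqrt (p + r*b^2) + (a - b)"
proof (cases "r \<le> 0")
  case True
  have "b^2 \<le> a^2" using ab by (simp add: power_mono)
  then have "r*a^2 \<le> r*b^2" using True by (simp add: mult_left_mono_neg)
  then have "sqrt (p + r*a^2) \<le> sqrt (p + r*b^2)" by (intro real_sqrt_le_mono) simp
  then show ?thesis using ab by linarith
next
  case False
  have B: "p + r*b^2 \<ge> 0" using p False by simp
  define sB where "sB = sqrt (p + r*b^2)"
  have "(r*b)^2 \<le> p + r*b^2"
  proof -
    have "r*r*b^2 \<le> r*b^2" using False r by (simp add: mult_right_mono mult_left_le)
    moreover have "(r*b)^2 = r*r*b^2" by (simp add: power2_eq_square algebra_simps)
    ultimately show ?thesis using p by linarith
  qed
  then have sB1: "r*b \<le> sB" unfolding sB_def by (rule real_le_rsqrt)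
  have sB0: "sB \<ge> 0" unfolding sB_def using B by simp
  have "p + r*a^2 = sB^2 + 2*(r*b)*(a-b) + r*(a-b)^2"
    unfolding sB_def using B by (simp add: algebra_simps power2_eq_square)
  also have "\<dots> \<le> sB^2 + 2*sB*(a-b) + (a-b)^2"
  proof -
    have "2*(r*b)*(a-b) \<le> 2*sB*(a-b)" using sB1 ab by (intro mult_right_mono) auto
    moreover have "r*(a-b)^2 \<le> 1*(a-b)^2" using r by (intro mult_right_mono) auto
    ultimately show ?thesis by simp
  qed
  also have "\<dots> = (sB + (a-b))^2" by (simp add: algebra_simps power2_eq_square)
  finally have "sqrt (p + r*a^2) \<le> sqrt ((sB + (a-b))^2)" by (rule real_sqrt_le_mono)
  also have "\<dots> = sB + (a - b)" using sB0 ab by simp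
  finally show ?thesis unfolding sB_def .
qed

text \<open>Since \<open>abc_weight x y = sqrt (1/y + (1 - 2/y) / x)\<close> and \<open>1 - 2/y \<le> 1\<close>, raising
  the degree x by one moves the weight by at most the change of \<open>1 / sqrt x\<close>.\<close>
definition abc_loss :: "real \<Rightarrow> real" where
  "abc_loss x = 1 / sqrt x - 1 / sqrt (x + 1)"

lemma abc_weight_Suc_ge:
  fixes x y :: real
  assumes x: "x \<ge> 1" and y: "y \<ge> 1"
  shows "abc_weight (x + 1) y \<ge> abc_weight x y - abc_loss x"
proof -
  define a where "a = 1 / sqrt x"
  define b where "b = 1 / sqrt (x + 1)"
  define r where "r = 1 - 2 / y"
  have a2: "a^2 = 1 / x" unfolding a_def using x by (simp add: power_divide)
  have b2: "b^2 = 1 / (x + 1)" unfolding b_def using x by (simp add: power_divide)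
  have weight_a: "(x + y - 2) / (x * y) = 1 / y + r * a^2"
    using x y by (subst abc_weight_radicand) (auto simp: a2 r_def algebra_simps)
  have weight_b: "(x + 1 + y - 2) / ((x + 1) * y) = 1 / y + r * b^2"
    using x y by (subst abc_weight_radicand) (auto simp: b2 r_def algebra_simps)
  have "sqrt (1 / y + r * a^2) \<le> sqrt (1 / y + r * b^2) + (a - b)"
  proof (rule sqrt_add_mult_square_le)
    show "b \<le> a" unfolding a_def b_def using x by (simp add: frac_le)
  qed (use x y in \<open>auto simp: b_def r_def\<close>)
  then show ?thesis unfolding abc_weight_def abc_loss_def weight_a weight_b a_def b_def by simp
qed

lemma mult_abc_loss_less:
  fixes w :: real
  assumes w: "w \<ge> 1"
  shows "w * abc_loss w < 1 / (2 * sqrt (w + 1))"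
proof -
  have "sqrt w * sqrt (w + 1) = sqrt (w * (w + 1))" by (simp add: real_sqrt_mult)
  also have "\<dots> < sqrt ((w + 1/2)^2)"
    by (subst real_sqrt_less_iff) (simp add: algebra_simps power2_eq_square)
  also have "\<dots> = w + 1/2" using w by simp
  finally have lt: "sqrt w * sqrt (w + 1) - w < 1/2" by simp
  have "w * abc_loss w = (sqrt w * sqrt (w + 1) - w) / sqrt (w + 1)"
    unfolding abc_loss_def using w by (simp add: field_simps)
  also have "\<dots> < (1/2) / sqrt (w + 1)" using lt w by (intro divide_strict_right_mono) auto
  finally show ?thesis by simp
qed

text \<open>By \<open>abc_weight_Suc_ge\<close>, \<open>x * abc_loss x\<close> bounds what the x old edges at an endpoint of
  degree x lose when an edge is added there.\<close>
lemma abc_loss_less_abc_weight: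
  fixes x z :: real
  assumes x: "x \<ge> 1" and z: "z \<ge> 1"
  shows "x * abc_loss x + z * abc_loss z < abc_weight (x + 1) (z + 1)"
proof -
  define P where "P = 1 / sqrt (x + 1)"
  define Q where "Q = 1 / sqrt (z + 1)"
  have P0: "P \<ge> 0" and Q0: "Q \<ge> 0" unfolding P_def Q_def using x z by auto
  have P2: "P^2 = 1 / (x + 1)" unfolding P_def using x by (simp add: power_divide)
  have Q2: "Q^2 = 1 / (z + 1)" unfolding Q_def using z by (simp add: power_divide)
  have weight: "((x + 1) + (z + 1) - 2) / ((x + 1) * (z + 1)) = P^2 + Q^2 - 2 * P^2 * Q^2"
    using x z by (subst abc_weight_radicand) (auto simp: P2 Q2)
  have PQ: "P * Q \<le> 1/2"
  proof -
    have "2 * (P * Q) \<le> P^2 + Q^2" using sum_squares_bound[of P Q] by (simp add: power2_eq_square)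
    moreover have "P^2 \<le> 1/2" "Q^2 \<le> 1/2" unfolding P2 Q2 using x z by (simp_all add: field_simps)
    ultimately show ?thesis by simp
  qed
  have "4 * (P^2 + Q^2 - 2 * P^2 * Q^2) - 4 * ((P + Q) / 2)^2 = 3 * (P - Q)^2 + 4 * (P * Q) * (1 - 2 * (P * Q))"
    by (simp add: algebra_simps power2_eq_square)
  moreover have "0 \<le> 4 * (P * Q) * (1 - 2 * (P * Q))" using PQ P0 Q0 by simp
  ultimately have "((P + Q) / 2)^2 \<le> P^2 + Q^2 - 2 * P^2 * Q^2"
    by (smt (verit) zero_le_power2)
  then have "(P + Q) / 2 \<le> abc_weight (x + 1) (z + 1)"
    unfolding abc_weight_def weight by (rule real_le_rsqrt)
  moreover have "x * abc_loss x < P / 2" using mult_abc_loss_less[OF x] unfolding P_def by simp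
  moreover have "z * abc_loss z < Q / 2" using mult_abc_loss_less[OF z] unfolding Q_def by simp
  ultimately show ?thesis by simp
qed

section \<open>Adding an edge increases the ABC index\<close>

lemma simple_graph_finite: "simple_graph V E \<Longrightarrow> finite V"
  unfolding simple_graph_def by simp

lemma simple_graph_sym: "simple_graph V E \<Longrightarrow> E x y \<Longrightarrow> E y x"
  unfolding simple_graph_def by blast

lemma simple_graph_irrefl: "simple_graph V E \<Longrightarrow> \<not> E x x"
  unfolding simple_graph_def by blast

lemma simple_graph_edge_in: "simple_graph V E \<Longrightarrow> E x y \<Longrightarrow> x \<in> V \<and> y \<in> V"
  unfolding simple_graph_def by blast

abbreviation neighbours :: "'a set \<Rightarrow> ('a \<Rightarrow> 'a \<Rightarrow> bool) \<Rightarrow> 'a \<Rightarrow> 'a set" where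
  "neighbours V E x \<equiv> {y \<in> V. E x y}"

lemma degree_pos:
  assumes "simple_graph V E" "E x y"
  shows "degree V E x \<ge> 1"
proof -
  have "y \<in> neighbours V E x" using simple_graph_edge_in[OF assms] assms(2) by simp
  moreover have "finite (neighbours V E x)" using simple_graph_finite[OF assms(1)] by simp
  ultimately have "card (neighbours V E x) > 0" using card_gt_0_iff by blast
  then show ?thesis unfolding degree_def by simp
qed

definition ABC2 :: "'a set \<Rightarrow> ('a \<Rightarrow> 'a \<Rightarrow> bool) \<Rightarrow> real" where
  "ABC2 V E = (\<Sum>x\<in>V. \<Sum>y\<in>neighbours V E x. abc_weight (degree V E x) (degree V E y))"

lemma ABC_eq_half_ABC2: "finite V \<Longrightarrow> ABC V E = ABC2 V E / 2"
proof -
  assume "finite V"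
  moreover have "{(u, v). u \<in> V \<and> v \<in> V \<and> E u v} = Sigma V (neighbours V E)" by auto
  ultimately show ?thesis unfolding ABC_def ABC2_def abc_weight_def by (simp add: sum.Sigma)
qed

lemma sum_neighbours_swap:
  fixes g :: "'a \<Rightarrow> real"
  assumes sg: "simple_graph V E"
  shows "(\<Sum>x\<in>V. \<Sum>y\<in>neighbours V E x. g y) = (\<Sum>y\<in>V. real (degree V E y) * g y)"
proof -
  have fin: "finite V" using simple_graph_finite[OF sg] .
  have "(\<Sum>x\<in>V. \<Sum>y\<in>neighbours V E x. g y) = (\<Sum>y\<in>V. \<Sum>x\<in>{x \<in> V. E x y}. g y)"
    using sum.swap_restrict[OF fin fin, where g = "\<lambda>x y. g y" and R = E] by simp
  also have "\<dots> = (\<Sum>y\<in>V. \<Sum>x\<in>neighbours V E y. g y)"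
    using simple_graph_sym[OF sg] by (intro sum.cong) blast+
  finally show ?thesis unfolding degree_def by simp
qed

definition add_edge :: "('a \<Rightarrow> 'a \<Rightarrow> bool) \<Rightarrow> 'a \<Rightarrow> 'a \<Rightarrow> 'a \<Rightarrow> 'a \<Rightarrow> bool" where
  "add_edge E u v x y \<longleftrightarrow> E x y \<or> (x = u \<and> y = v) \<or> (x = v \<and> y = u)"

lemma simple_graph_add_edge:
  "simple_graph V E \<Longrightarrow> u \<in> V \<Longrightarrow> v \<in> V \<Longrightarrow> u \<noteq> v \<Longrightarrow> simple_graph V (add_edge E u v)"
  unfolding simple_graph_def add_edge_def by blast

lemma neighbours_add_edge:
  assumes "u \<in> V" "v \<in> V" "u \<noteq> v"
  shows "neighbours V (add_edge E u v) x =
    neighbours V E x \<union> (if x = u then {v} else {}) \<union> (if x = v then {u} else {})"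
  using assms unfolding add_edge_def by auto

context
  fixes V :: "'a set" and E :: "'a \<Rightarrow> 'a \<Rightarrow> bool" and u v :: 'a
  assumes sg: "simple_graph V E" and u: "u \<in> V" and v: "v \<in> V" and uv: "u \<noteq> v"
    and non_edge: "\<not> E u v"
begin

lemma not_edge_vu: "\<not> E v u"
  using non_edge simple_graph_sym[OF sg] by blast

lemma degree_add_edge:
  "degree V (add_edge E u v) x = degree V E x + (if x = u \<or> x = v then 1 else 0)"
proof -
  have fin: "finite (neighbours V E x)" using simple_graph_finite[OF sg] by simp
  show ?thesis
    unfolding degree_def neighbours_add_edge[OF u v uv]
    using fin uv non_edge not_edge_vu u v by (auto simp: card_insert_if)
qed

lemma sum_neighbours_add_edge:
  fixes f :: "'a \<Rightarrow> 'a \<Rightarrow> real"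
  shows "(\<Sum>x\<in>V. \<Sum>y\<in>neighbours V (add_edge E u v) x. f x y)
       = (\<Sum>x\<in>V. \<Sum>y\<in>neighbours V E x. f x y) + f u v + f v u"
proof -
  have fin: "finite V" using simple_graph_finite[OF sg] .
  have "(\<Sum>y\<in>neighbours V (add_edge E u v) x. f x y)
      = (\<Sum>y\<in>neighbours V E x. f x y) + (if x = u then f u v else 0) + (if x = v then f v u else 0)" for x
    unfolding neighbours_add_edge[OF u v uv]
    using fin uv non_edge not_edge_vu by (auto simp: sum.union_disjoint)
  then show ?thesis using fin u v by (simp add: sum.distrib)
qed

definition endpoint_loss :: "'a \<Rightarrow> real" where
  "endpoint_loss x = (if x = u \<or> x = v then abc_loss (degree V E x) else 0)"

lemma abc_weight_add_edge_ge:
  assumes xy: "E x y"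
  shows "abc_weight (degree V (add_edge E u v) x) (degree V (add_edge E u v) y)
    \<ge> abc_weight (degree V E x) (degree V E y) - (endpoint_loss x + endpoint_loss y)"
proof -
  let ?D = "\<lambda>x. real (degree V E x)" and ?D' = "\<lambda>x. real (degree V (add_edge E u v) x)"
  have one_end: "abc_weight (?D' x) (?D' y) \<ge> abc_weight (?D x) (?D y) - endpoint_loss x"
    if xy: "E x y" "y \<noteq> u" "y \<noteq> v" for x y
  proof (cases "x = u \<or> x = v")
    case True
    have "?D x \<ge> 1" "?D y \<ge> 1"
      using degree_pos[OF sg xy(1)] degree_pos[OF sg simple_graph_sym[OF sg xy(1)]] by simp_all
    then have "abc_weight (1 + ?D x) (?D y) \<ge> abc_weight (?D x) (?D y) - abc_loss (?D x)"
      using abc_weight_Suc_ge[of "?D x" "?D y"] by (simp add: add.commute)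
    then show ?thesis using True xy unfolding endpoint_loss_def degree_add_edge by simp
  qed (use xy in \<open>simp add: endpoint_loss_def degree_add_edge\<close>)
  show ?thesis
  proof (cases "y = u \<or> y = v")
    case True
    then have "x \<noteq> u" "x \<noteq> v"
      using xy non_edge not_edge_vu simple_graph_irrefl[OF sg] by auto
    then show ?thesis
      using one_end[OF simple_graph_sym[OF sg xy]] by (simp add: abc_weight_commute endpoint_loss_def)
  next
    case False
    then show ?thesis using one_end[OF xy] by (simp add: endpoint_loss_def)
  qed
qed

lemma sum_endpoint_loss:
  "(\<Sum>x\<in>V. \<Sum>y\<in>neighbours V E x. endpoint_loss x + endpoint_loss y)
    = 2 * (degree V E u * abc_loss (degree V E u) + degree V E v * abc_loss (degree V E v))"
proof -
  have "(\<Sum>x\<in>V. \<Sum>y\<in>neighbours V E x. endpoint_loss x + endpoint_loss y)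
      = 2 * (\<Sum>x\<in>V. degree V E x * endpoint_loss x)"
    using sum_neighbours_swap[OF sg, of endpoint_loss] unfolding degree_def by (simp add: sum.distrib)
  moreover have "V \<inter> {x. x = u \<or> x = v} = {u, v}" using u v by auto
  ultimately show ?thesis using simple_graph_finite[OF sg] uv
    by (simp add: endpoint_loss_def if_distrib sum.If_cases)
qed

lemma ABC2_add_edge_gt:
  assumes deg_u: "degree V E u \<ge> 1" and deg_v: "degree V E v \<ge> 1"
  shows "ABC2 V E < ABC2 V (add_edge E u v)"
proof -
  let ?D = "\<lambda>x. real (degree V E x)" and ?D' = "\<lambda>x. real (degree V (add_edge E u v) x)"
  have "(\<Sum>x\<in>V. \<Sum>y\<in>neighbours V E x. abc_weight (?D x) (?D y) - (endpoint_loss x + endpoint_loss y))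
      \<le> (\<Sum>x\<in>V. \<Sum>y\<in>neighbours V E x. abc_weight (?D' x) (?D' y))"
    using abc_weight_add_edge_ge by (intro sum_mono) auto
  then have "ABC2 V E - 2 * (?D u * abc_loss (?D u) + ?D v * abc_loss (?D v))
      \<le> (\<Sum>x\<in>V. \<Sum>y\<in>neighbours V E x. abc_weight (?D' x) (?D' y))"
    unfolding ABC2_def sum_endpoint_loss[symmetric] by (simp add: sum_subtractf)
  moreover have "2 * (?D u * abc_loss (?D u) + ?D v * abc_loss (?D v)) < 2 * abc_weight (?D' u) (?D' v)"
    using abc_loss_less_abc_weight[of "?D u" "?D v"] deg_u deg_v uv
    by (simp add: degree_add_edge add.commute)
  ultimately show ?thesis
    unfolding ABC2_def[of V "add_edge E u v"] sum_neighbours_add_edge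
    by (simp add: abc_weight_commute[of "?D' v"])
qed

end

lemma ABC2_strict_mono:
  assumes sgE: "simple_graph V E" and sgF: "simple_graph V F" and sub: "\<And>x y. E x y \<Longrightarrow> F x y"
    and deg: "\<And>x. x \<in> V \<Longrightarrow> degree V E x \<ge> 1" and ne: "E \<noteq> F"
  shows "ABC2 V E < ABC2 V F"
  using sgE sub deg ne
proof (induction "card {(x, y) \<in> V \<times> V. F x y \<and> \<not> E x y}" arbitrary: E rule: less_induct)
  case less
  have "\<exists>u v. F u v \<and> \<not> E u v" using less.prems(2,4) by blast
  then obtain u v where uv: "u \<in> V" "v \<in> V" "F u v" "\<not> E u v"
    using simple_graph_edge_in[OF sgF] by blast
  have "u \<noteq> v" using uv(3) simple_graph_irrefl[OF sgF] by blast
  let ?E' = "add_edge E u v"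
  have sg': "simple_graph V ?E'" using simple_graph_add_edge[OF less.prems(1) uv(1,2) \<open>u \<noteq> v\<close>] .
  have sub': "?E' x y \<Longrightarrow> F x y" for x y
    using less.prems(2) uv(3) simple_graph_sym[OF sgF] unfolding add_edge_def by blast
  have deg': "degree V ?E' x \<ge> 1" if "x \<in> V" for x
    using degree_add_edge[OF less.prems(1) uv(1,2) \<open>u \<noteq> v\<close> uv(4)] less.prems(3)[OF that] by simp
  have gt: "ABC2 V E < ABC2 V ?E'"
    using ABC2_add_edge_gt[OF less.prems(1) uv(1,2) \<open>u \<noteq> v\<close> uv(4)] less.prems(3) uv(1,2) by blast
  show ?case
  proof (cases "?E' = F")
    case False
    have "{(x, y) \<in> V \<times> V. F x y \<and> \<not> ?E' x y} \<subset> {(x, y) \<in> V \<times> V. F x y \<and> \<not> E x y}"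
      using uv unfolding add_edge_def by auto
    then have "card {(x, y) \<in> V \<times> V. F x y \<and> \<not> ?E' x y} < card {(x, y) \<in> V \<times> V. F x y \<and> \<not> E x y}"
      using simple_graph_finite[OF sgF]
      by (intro psubset_card_mono) (auto intro: rev_finite_subset[of "V \<times> V"])
    with less.hyps[OF this sg' sub' deg' False] gt show ?thesis by simp
  qed (use gt in simp)
qed

section \<open>Convexity of the contribution of a block\<close>

definition sep_weight :: "real \<Rightarrow> real \<Rightarrow> real" where
  "sep_weight s d = sqrt (1/s + (1 - 2/s) / d)"

definition sep_weight' :: "real \<Rightarrow> real \<Rightarrow> real" where
  "sep_weight' s d = - (1 - 2/s) / (2 * d^2 * sep_weight s d)"

definition sep_weight'' :: "real \<Rightarrow> real \<Rightarrow> real" where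
  "sep_weight'' s d = (1 - 2/s) / (d^3 * sep_weight s d) - (1 - 2/s)^2 / (4 * d^4 * (sep_weight s d)^3)"

definition clique_weight :: "real \<Rightarrow> real" where
  "clique_weight d = sqrt (2 * (d - 1)) / d"

definition clique_weight' :: "real \<Rightarrow> real" where
  "clique_weight' d = (2 - d) / (sqrt (2 * (d - 1)) * d^2)"

definition clique_weight'' :: "real \<Rightarrow> real" where
  "clique_weight'' d = (3*d^2 - 12*d + 8) / ((sqrt (2 * (d - 1)))^3 * d^3)"

lemma sep_weight_eq_abc_weight: "s > 0 \<Longrightarrow> d > 0 \<Longrightarrow> sep_weight s d = abc_weight s d"
  unfolding sep_weight_def abc_weight_def by (simp add: field_simps)

lemma clique_weight_eq_abc_weight: "d > 0 \<Longrightarrow> clique_weight d = abc_weight d d"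
  unfolding clique_weight_def abc_weight_def by (simp add: real_sqrt_divide)

lemma sep_weight_pos: "s > 2 \<Longrightarrow> d > 0 \<Longrightarrow> sep_weight s d > 0"
  unfolding sep_weight_def by (intro real_sqrt_gt_zero add_pos_nonneg) simp_all

lemma DERIV_sep_weight:
  assumes "s > 2" "d > 0"
  shows "DERIV (sep_weight s) d :> sep_weight' s d"
proof -
  have pos: "1/s + (1 - 2/s) / d > 0" using sep_weight_pos[OF assms] unfolding sep_weight_def by simp
  have "DERIV (\<lambda>d. 1/s + (1 - 2/s) / d) d :> - (1 - 2/s) / d^2"
    using assms by (auto intro!: derivative_eq_intros simp: field_simps power2_eq_square)
  from DERIV_chain2[OF DERIV_real_sqrt[OF pos] this] show ?thesis
    unfolding sep_weight_def[abs_def] sep_weight'_def by (rule DERIV_cong) (simp add: field_simps)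
qed

lemma DERIV_sep_weight':
  assumes s: "s > 2" and d: "d > 0"
  shows "DERIV (sep_weight' s) d :> sep_weight'' s d"
proof -
  let ?r = "sep_weight s d" and ?b = "1 - 2/s"
  have r: "?r > 0" using sep_weight_pos[OF s d] .
  have "DERIV (\<lambda>d. 2 * d^2 * sep_weight s d) d :> 2 * (2 * d * ?r + d^2 * (- ?b / (2 * d^2 * ?r)))"
    using s d by (auto intro!: derivative_eq_intros DERIV_sep_weight[unfolded sep_weight'_def]
        simp: algebra_simps)
  from DERIV_divide[OF DERIV_const this]
  have "DERIV (sep_weight' s) d :>
      (0 * (2 * d^2 * ?r) - (- ?b) * (2 * (2 * d * ?r + d^2 * (- ?b / (2 * d^2 * ?r)))))
      / ((2 * d^2 * ?r) * (2 * d^2 * ?r))"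
    unfolding sep_weight'_def[abs_def] using r d by simp
  also have "(0 * (2 * d^2 * ?r) - (- ?b) * (2 * (2 * d * ?r + d^2 * (- ?b / (2 * d^2 * ?r)))))
      / ((2 * d^2 * ?r) * (2 * d^2 * ?r)) = sep_weight'' s d"
  proof -
    have "(0 * (2 * d^2 * r) - (- b) * (2 * (2 * d * r + d^2 * (- b / (2 * d^2 * r)))))
        / ((2 * d^2 * r) * (2 * d^2 * r)) = b / (d^3 * r) - b^2 / (4 * d^4 * r^3)"
      if "r > 0" for r b :: real
      using that d by (simp add: field_simps power2_eq_square power3_eq_cube)
        (simp add: algebra_simps power2_eq_square power3_eq_cube power4_eq_xxxx)
    then show ?thesis unfolding sep_weight''_def using r by blast
  qed
  finally show ?thesis .
qed

lemma DERIV_sqrt_pred_double: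
  "d > 1 \<Longrightarrow> DERIV (\<lambda>d. sqrt (2 * (d - 1))) d :> 1 / sqrt (2 * (d - 1))"
  by (auto intro!: derivative_eq_intros simp: field_simps)

lemma DERIV_clique_weight:
  assumes d: "d > 1"
  shows "DERIV clique_weight d :> clique_weight' d"
proof -
  let ?w = "sqrt (2 * (d - 1))"
  have w: "?w > 0" "?w * ?w = 2 * (d - 1)" using d by simp_all
  from DERIV_divide[OF DERIV_sqrt_pred_double[OF d] DERIV_ident]
  have "DERIV clique_weight d :> (1 / ?w * d - ?w * 1) / (d * d)"
    unfolding clique_weight_def[abs_def] using d by simp
  also have "(1 / ?w * d - ?w * 1) / (d * d) = clique_weight' d"
  proof -
    have "(1 / w * d - w * 1) / (d * d) = (d - w * w) / (w * d^2)" if "w > 0" for w :: real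
      using that d by (simp add: field_simps power2_eq_square)
    then show ?thesis unfolding clique_weight'_def using w by simp
  qed
  finally show ?thesis .
qed

lemma DERIV_clique_weight':
  assumes d: "d > 1"
  shows "DERIV clique_weight' d :> clique_weight'' d"
proof -
  let ?w = "sqrt (2 * (d - 1))"
  have w: "?w > 0" "?w * ?w = 2 * (d - 1)" using d by simp_all
  have "DERIV (\<lambda>d. sqrt (2 * (d - 1)) * d^2) d :> 1 / ?w * d^2 + ?w * (2 * d)"
    using DERIV_mult[OF DERIV_sqrt_pred_double[OF d] DERIV_pow[of 2]]
    by (rule DERIV_cong) (simp add: algebra_simps)
  from DERIV_divide[OF DERIV_diff[OF DERIV_const DERIV_ident] this]
  have "DERIV clique_weight' d :>
      ((0 - 1) * (?w * d^2) - (2 - d) * (1 / ?w * d^2 + ?w * (2 * d))) / ((?w * d^2) * (?w * d^2))"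
    unfolding clique_weight'_def[abs_def] using w d by simp
  also have "((0 - 1) * (?w * d^2) - (2 - d) * (1 / ?w * d^2 + ?w * (2 * d))) / ((?w * d^2) * (?w * d^2))
      = (- (?w * ?w) * d^2 - (2 - d) * (d^2 + 2 * (?w * ?w) * d)) / (?w^3 * d^4)"
  proof -
    have "((0 - 1) * (w * d^2) - (2 - d) * (1 / w * d^2 + w * (2 * d))) / ((w * d^2) * (w * d^2))
        = (- (w * w) * d^2 - (2 - d) * (d^2 + 2 * (w * w) * d)) / (w^3 * d^4)" if "w > 0" for w :: real
      using that d by (simp add: field_simps power2_eq_square power3_eq_cube)
        (simp add: algebra_simps eval_nat_numeral)
    then show ?thesis using w(1) by blast
  qed
  also have "\<dots> = d * (3*d^2 - 12*d + 8) / (?w^3 * d^4)"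
    unfolding w(2) by (simp add: algebra_simps power2_eq_square)
  also have "\<dots> = clique_weight'' d"
    unfolding clique_weight''_def using w d by (simp add: field_simps eval_nat_numeral)
  finally show ?thesis .
qed

text \<open>Twice the contribution to the ABC index of a block of \<open>a = d - K + 1\<close> vertices of degree d
  that are joined to each other and to all K vertices of a separator of degree s: the \<open>K a\<close> edges
  to the separator and the \<open>a (a - 1) / 2\<close> inner edges. The degree d is a real variable here.\<close>
definition block_abc :: "real \<Rightarrow> real \<Rightarrow> real \<Rightarrow> real" where
  "block_abc K s d = 2*K*(d-K+1) * sep_weight s d + (d-K+1)*(d-K) * clique_weight d"

definition block_abc' :: "real \<Rightarrow> real \<Rightarrow> real \<Rightarrow> real" where
  "block_abc' K s d = 2*K*(sep_weight s d + (d-K+1) * sep_weight' s d)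
     + (2*(d-K+1) - 1) * clique_weight d + (d-K+1)*(d-K) * clique_weight' d"

definition block_abc'' :: "real \<Rightarrow> real \<Rightarrow> real \<Rightarrow> real" where
  "block_abc'' K s d = 2*K*(2 * sep_weight' s d + (d-K+1) * sep_weight'' s d)
     + 2 * clique_weight d + 2*(2*(d-K+1) - 1) * clique_weight' d + (d-K+1)*(d-K) * clique_weight'' d"

lemma DERIV_block_abc: "s > 2 \<Longrightarrow> d > 1 \<Longrightarrow> DERIV (block_abc K s) d :> block_abc' K s d"
  unfolding block_abc_def[abs_def] block_abc'_def
  by (auto intro!: derivative_eq_intros DERIV_sep_weight DERIV_clique_weight simp: algebra_simps)

lemma DERIV_block_abc': "s > 2 \<Longrightarrow> d > 1 \<Longrightarrow> DERIV (block_abc' K s) d :> block_abc'' K s d"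
  unfolding block_abc'_def[abs_def] block_abc''_def
  by (auto intro!: derivative_eq_intros DERIV_sep_weight DERIV_clique_weight DERIV_sep_weight'
      DERIV_clique_weight' simp: algebra_simps)

lemma block_abc''_sep_part_ge:
  assumes K: "K \<ge> 1" and dK: "d > K" and s: "s > 2"
  shows "2*K*(2 * sep_weight' s d + (d-K+1) * sep_weight'' s d)
    \<ge> - (K*(4*(K-1) + (d-K+1))/2) * ((1 - 2/s) / sep_weight s d) / d^3"
proof -
  define b where "b = 1 - 2/s"
  define R where "R = sep_weight s d"
  define c where "c = d - K + 1"
  have d: "d > 0" and c: "c \<ge> 0" using K dK unfolding c_def by simp_all
  have b: "b \<ge> 0" unfolding b_def using s by (simp add: field_simps)
  have R: "R > 0" unfolding R_def using sep_weight_pos[OF s d] .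
  have "R^2 = 1/s + b/d" unfolding R_def sep_weight_def b_def using s d
    by (simp add: add_nonneg_nonneg)
  then have "d * R^2 = d / s + b" using d by (simp add: field_simps)
  moreover have "d / s > 0" using d s by simp
  ultimately have dR: "b / (d * R^2) \<le> 1" using d R b by (simp add: divide_le_eq)
  have "2*K*(2 * sep_weight' s d + (d-K+1) * sep_weight'' s d)
      = - (2*K*(b/R)/d^3) * ((K-1) + c * (b / (d * R^2)) / 4)"
    unfolding sep_weight'_def sep_weight''_def b_def[symmetric] R_def[symmetric] c_def[symmetric]
    unfolding c_def using R d by (simp add: field_simps power2_eq_square power3_eq_cube power4_eq_xxxx)
  also have "\<dots> \<ge> - (2*K*(b/R)/d^3) * ((K-1) + c / 4)"
    using mult_left_mono[OF dR c] K b R d by (intro mult_left_mono_neg) auto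
  also have "- (2*K*(b/R)/d^3) * ((K-1) + c / 4) = - (K*(4*(K-1) + c)/2) * (b / R) / d^3"
    using R d by (simp add: field_simps)
  finally show ?thesis unfolding b_def R_def c_def .
qed

definition clique_poly :: "real \<Rightarrow> real \<Rightarrow> real" where
  "clique_poly c d = 8*(d-1)^2*d^2 + 4*(2*c-1)*(2-d)*(d-1)*d + c*(c-1)*(3*d^2-12*d+8)"

lemma block_abc''_clique_part_eq:
  assumes d: "d > 1"
  shows "2 * clique_weight d + 2*(2*c-1) * clique_weight' d + c*(c-1) * clique_weight'' d
    = clique_poly c d / ((sqrt (2 * (d - 1)))^3 * d^3)"
proof -
  define w where "w = sqrt (2 * (d - 1))"
  have w: "w > 0" and ww: "w * w = 2 * (d - 1)" unfolding w_def using d by simp_all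
  have "2 * clique_weight d + 2*(2*c-1) * clique_weight' d + c*(c-1) * clique_weight'' d
     = (2*(w*w)*(w*w)*d^2 + 2*(2*c-1)*(2-d)*(w*w)*d + c*(c-1)*(3*d^2-12*d+8)) / (w^3*d^3)"
    unfolding clique_weight_def clique_weight'_def clique_weight''_def w_def[symmetric]
    using w d by (simp add: field_simps power2_eq_square power3_eq_cube)
  also have "\<dots> = clique_poly c d / (w^3 * d^3)"
    unfolding ww clique_poly_def by (simp add: algebra_simps power2_eq_square)
  finally show ?thesis unfolding w_def .
qed

lemma quartic_nonneg:
  fixes q :: real
  assumes q: "q \<ge> 0"
  shows "5*q - 2*q^2 - 3*q^3 + 4*q^4 \<ge> 0"
proof -
  have "4*q^3 - 3*q^2 - 2*q + 5 > 0"
  proof (cases "q < 1")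
    case True
    then have "(1-q)*(3*q+5) > 0" using q by simp
    moreover have "4*q^3 \<ge> 0" using q by simp
    moreover have "(1-q)*(3*q+5) = 5 - 2*q - 3*q^2" by (simp add: algebra_simps power2_eq_square)
    ultimately show ?thesis by linarith
  next
    case False
    then have "q^2*(4*q-4) \<ge> 0" by simp
    moreover have "(q-1)^2 \<ge> 0" by simp
    moreover have "q^2*(4*q-4) = 4*q^3 - 4*q^2" by (simp add: algebra_simps power2_eq_square power3_eq_cube)
    moreover have "(q-1)^2 = q^2 - 2*q + 1" by (simp add: algebra_simps power2_eq_square)
    ultimately show ?thesis by linarith
  qed
  then have "q * (4*q^3 - 3*q^2 - 2*q + 5) \<ge> 0" using q by simp
  then show ?thesis by (simp add: algebra_simps power2_eq_square power3_eq_cube power4_eq_xxxx)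
qed

lemma clique_poly_gt:
  fixes c d K :: real
  assumes c: "c > 1" and K: "K \<ge> 1" and d: "d = c + K - 1"
  shows "2 * clique_poly c d > 3 * K*(4*(K-1) + c) * (d-1) * d"
proof -
  define p where "p = c - 1"
  define q where "q = K - 1"
  have p: "p > 0" and q: "q \<ge> 0" unfolding p_def q_def using c K by simp_all
  have "2 * clique_poly c d - 3 * K*(4*(K-1) + c) * (d-1) * d =
     (5*q - 2*q^2 - 3*q^3 + 4*q^4) + (3*p + 12*p*q + 30*p*q^2 + 21*p*q^3 + 12*p^2 + 48*p^2*q
       + 36*p^2*q^2 + 15*p^3 + 25*p^3*q + 6*p^4)"
    unfolding clique_poly_def d p_def q_def
    by (simp add: algebra_simps power2_eq_square power3_eq_cube power4_eq_xxxx)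
  moreover have "3*p + 12*p*q + 30*p*q^2 + 21*p*q^3 + 12*p^2 + 48*p^2*q + 36*p^2*q^2 + 15*p^3
      + 25*p^3*q + 6*p^4 > 0"
    using p q by (simp add: add_pos_nonneg)
  ultimately show ?thesis using quartic_nonneg[OF q] by linarith
qed

lemma mult_sqrt_cube_less:
  fixes M X P d :: real
  assumes M: "M > 0" and X: "X \<ge> 0" "X^2 \<le> d" and d: "d > 1"
    and P: "2 * P > 6 * M * (d - 1) * d"
  shows "M * (X * (sqrt (2 * (d - 1)))^3) < P"
proof (rule power2_less_imp_less)
  have "(sqrt (2 * (d - 1))^3)^2 = (sqrt (2 * (d - 1))^2)^3"
    by (metis power_mult mult.commute)
  also have "\<dots> = (2 * (d - 1))^3" using d by simp
  also have "\<dots> = 8 * (d - 1)^3" by (simp add: power3_eq_cube algebra_simps)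
  finally have "(X * sqrt (2 * (d - 1))^3)^2 = X^2 * (8 * (d - 1)^3)"
    by (simp add: power_mult_distrib)
  also have "\<dots> \<le> d * (8 * (d - 1)^3)"
    using X d by (intro mult_right_mono) auto
  also have "\<dots> \<le> (d * (d - 1))^2 * 8"
  proof -
    have "(d * (d - 1))^2 * 8 - d * (8 * (d - 1)^3) = 8 * d * (d - 1)^2"
      by (simp add: power2_eq_square power3_eq_cube algebra_simps)
    then show ?thesis using d by (smt (verit) zero_le_mult_iff zero_le_power2)
  qed
  finally have "(M * (X * sqrt (2 * (d - 1))^3))^2 \<le> M^2 * ((d * (d - 1))^2 * 8)"
    by (simp add: power_mult_distrib mult_left_mono)
  also have "\<dots> < (3 * M * (d - 1) * d)^2"
    using M d by (simp add: power_mult_distrib)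
  also have "\<dots> \<le> P^2"
    using P M d by (intro power_mono) (auto simp: algebra_simps)
  finally show "(M * (X * sqrt (2 * (d - 1))^3))^2 < P^2" .
  show "P \<ge> 0" using P M d by (smt (verit) mult_pos_pos)
qed

lemma block_abc''_pos:
  assumes K: "K \<ge> 1" and dK: "d > K" and s: "s > 2"
  shows "block_abc'' K s d > 0"
proof -
  define c where "c = d - K + 1"
  define M where "M = K * (4*(K-1) + c) / 2"
  define X where "X = (1 - 2/s) / sep_weight s d"
  define w where "w = sqrt (2 * (d - 1))"
  have d: "d > 1" and c: "c > 1" using K dK unfolding c_def by simp_all
  have M: "M > 0" unfolding M_def using K c by (simp add: add_pos_nonneg)
  have w: "w > 0" unfolding w_def using d by simp
  have R: "sep_weight s d > 0" using sep_weight_pos[OF s] d by simp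
  have X: "X \<ge> 0" "X^2 \<le> d"
  proof -
    have b: "0 \<le> 1 - 2/s" "1 - 2/s \<le> 1" using s by (simp_all add: field_simps)
    then show "X \<ge> 0" unfolding X_def using R by simp
    have "(sep_weight s d)^2 = 1/s + (1 - 2/s)/d"
      unfolding sep_weight_def using s d b by (simp add: add_nonneg_nonneg)
    then have "(1 - 2/s) / (sep_weight s d)^2 \<le> d" using R d s b by (simp add: field_simps)
    then have "(1 - 2/s) * ((1 - 2/s) / (sep_weight s d)^2) \<le> 1 * d"
      using b d by (intro mult_mono) auto
    then show "X^2 \<le> d" unfolding X_def by (simp add: power2_eq_square)
  qed
  have "M * (X * w^3) < clique_poly c d"
    unfolding w_def using clique_poly_gt[OF c K] M X d unfolding c_def M_def
    by (intro mult_sqrt_cube_less) simp_all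
  then have "0 < - M * X / d^3 + clique_poly c d / (w^3 * d^3)"
    using w d by (simp add: field_simps)
  also have "- M * X / d^3 \<le> 2*K*(2 * sep_weight' s d + (d-K+1) * sep_weight'' s d)"
    using block_abc''_sep_part_ge[OF K dK s] unfolding M_def X_def c_def by simp
  also have "clique_poly c d / (w^3 * d^3)
      = 2 * clique_weight d + 2*(2*(d-K+1) - 1) * clique_weight' d + (d-K+1)*(d-K) * clique_weight'' d"
    using block_abc''_clique_part_eq[OF d, of c] unfolding w_def c_def by (simp add: algebra_simps)
  finally show ?thesis unfolding block_abc''_def by (simp add: add.assoc)
qed

lemma block_abc_mvt:
  assumes K: "K \<ge> 1" and s: "s > 2" and uv: "K \<le> u" "u < v"
  obtains z where "u < z" "z < v" "block_abc K s v - block_abc K s u = (v - u) * block_abc' K s z"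
proof -
  have "continuous_on {u..v} (block_abc K s)"
    unfolding block_abc_def[abs_def] sep_weight_def clique_weight_def
    using K uv s by (intro continuous_intros) auto
  moreover have "block_abc K s differentiable (at x)" if "u < x" for x
    using DERIV_block_abc[OF s] that uv K unfolding real_differentiable_def by force
  ultimately obtain l z where z: "u < z" "z < v" "DERIV (block_abc K s) z :> l"
    "block_abc K s v - block_abc K s u = (v - u) * l"
    using MVT[OF uv(2)] by blast
  moreover have "l = block_abc' K s z"
    using DERIV_unique[OF z(3) DERIV_block_abc[OF s]] z uv K by simp
  ultimately show ?thesis using that by blast
qed

lemma block_abc'_strict_mono:
  assumes K: "K \<ge> 1" and s: "s > 2" and "K < x" "x < y"
  shows "block_abc' K s x < block_abc' K s y"
  using assms(4)
proof (rule DERIV_pos_imp_increasing)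
  fix z assume "x \<le> z" "z \<le> y"
  then have "z > K" using assms by simp
  then show "\<exists>l. DERIV (block_abc' K s) z :> l \<and> l > 0"
    using DERIV_block_abc'[OF s] block_abc''_pos[OF K _ s] K by (intro exI[of _ "block_abc'' K s z"]) auto
qed

text \<open>Strict convexity: moving vertices from the smaller block to the larger raises the sum.\<close>
lemma block_abc_convex_less:
  assumes K: "K \<ge> 1" and s: "s > 2" and ab: "2 \<le> a" "a \<le> b"
  shows "block_abc K s (K+a-1) + block_abc K s (K+b-1) < block_abc K s K + block_abc K s (K+a+b-2)"
proof -
  obtain z1 where z1: "K < z1" "z1 < K+a-1"
    "block_abc K s (K+a-1) - block_abc K s K = (a-1) * block_abc' K s z1"
    using block_abc_mvt[OF K s, of K "K+a-1"] ab by auto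
  obtain z2 where z2: "K+b-1 < z2" "z2 < K+a+b-2"
    "block_abc K s (K+a+b-2) - block_abc K s (K+b-1) = (a-1) * block_abc' K s z2"
    using block_abc_mvt[OF K s, of "K+b-1" "K+a+b-2"] ab by (auto simp: algebra_simps)
  have "block_abc' K s z1 < block_abc' K s z2" using block_abc'_strict_mono[OF K s z1(1)] z1 z2 ab by simp
  then have "(a-1) * block_abc' K s z1 < (a-1) * block_abc' K s z2" using ab by simp
  then show ?thesis using z1(3) z2(3) by simp
qed

section \<open>The graphs \<open>K\<^sub>k \<or> (K\<^sub>a + K\<^sub>b)\<close>\<close>

text \<open>The graph \<open>K\<^sub>S \<or> (K\<^sub>A + K\<^sub>B)\<close> with separator \<open>S = V - A - B\<close>.\<close>
definition join_graph :: "'a set \<Rightarrow> 'a set \<Rightarrow> 'a set \<Rightarrow> 'a \<Rightarrow> 'a \<Rightarrow> bool" where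
  "join_graph V A B x y \<longleftrightarrow> x \<in> V \<and> y \<in> V \<and> x \<noteq> y \<and> \<not> (x \<in> A \<and> y \<in> B) \<and> \<not> (x \<in> B \<and> y \<in> A)"

lemma join_graph_swap: "join_graph V A B = join_graph V B A"
  unfolding join_graph_def by (intro ext) auto

lemma simple_graph_join_graph: "finite V \<Longrightarrow> simple_graph V (join_graph V A B)"
  unfolding simple_graph_def join_graph_def by auto

text \<open>Twice the ABC index of \<open>K\<^sub>k \<or> (K\<^sub>a + K\<^sub>b)\<close>.\<close>
definition join_abc :: "nat \<Rightarrow> nat \<Rightarrow> nat \<Rightarrow> real" where
  "join_abc k a b = (let s = real k + real a + real b - 1 in
     real k * (real k - 1) * abc_weight s s
     + block_abc (real k) s (real k + real a - 1) + block_abc (real k) s (real k + real b - 1))"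

locale two_blocks =
  fixes V A B :: "'a set"
  assumes finite_V: "finite V" and A_subset: "A \<subseteq> V" and B_subset: "B \<subseteq> V" and disjoint: "A \<inter> B = {}"
begin

abbreviation "S \<equiv> V - A - B"

lemma finite_blocks: "finite S" "finite A" "finite B"
  using finite_V A_subset B_subset finite_subset by auto

lemma sum_blocks: "sum f V = sum f S + sum f A + sum f B"
proof -
  have "S \<inter> (A \<union> B) = {}" by auto
  then have "sum f (S \<union> (A \<union> B)) = sum f S + (sum f A + sum f B)"
    using finite_blocks disjoint by (simp add: sum.union_disjoint)
  moreover have "S \<union> (A \<union> B) = V" using A_subset B_subset by auto
  ultimately show ?thesis by (simp add: add.assoc)
qed

lemma card_V: "card V = card S + card A + card B"
  using sum_blocks[of "\<lambda>_. 1 :: nat"] by simp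

lemma sum_neighbours_S:
  fixes f :: "'a \<Rightarrow> real"
  assumes "x \<in> S"
  shows "(\<Sum>y\<in>neighbours V (join_graph V A B) x. f y) = sum f S + sum f A + sum f B - f x"
proof -
  have "neighbours V (join_graph V A B) x = V - {x}" unfolding join_graph_def using assms by auto
  then show ?thesis using assms finite_V by (simp add: sum_diff1 sum_blocks)
qed

lemma sum_neighbours_A:
  fixes f :: "'a \<Rightarrow> real"
  assumes "x \<in> A"
  shows "(\<Sum>y\<in>neighbours V (join_graph V A B) x. f y) = sum f S + sum f A - f x"
proof -
  have "neighbours V (join_graph V A B) x = V - B - {x}"
    unfolding join_graph_def using assms A_subset disjoint by auto
  then show ?thesis using assms A_subset B_subset disjoint finite_V
    by (auto simp: sum_diff1 sum_diff sum_blocks)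
qed

end

lemma (in two_blocks) ABC2_join_graph:
  assumes k: "card S \<ge> 1" and a: "card A \<ge> 1" and b: "card B \<ge> 1"
  shows "ABC2 V (join_graph V A B) = join_abc (card S) (card A) (card B)"
proof -
  interpret swapped: two_blocks V B A using finite_V A_subset B_subset disjoint by unfold_locales auto
  have S_swapped: "V - B - A = S" by auto
  let ?G = "join_graph V A B" and ?k = "real (card S)" and ?a = "real (card A)" and ?b = "real (card B)"
  let ?D = "\<lambda>x. real (degree V ?G x)"
  define s where "s = ?k + ?a + ?b - 1"
  define da where "da = ?k + ?a - 1"
  define db where "db = ?k + ?b - 1"
  have pos: "s > 0" "da > 0" "db > 0" unfolding s_def da_def db_def using k a b by simp_all
  have real_degree: "?D x = (\<Sum>y\<in>neighbours V ?G x. 1)" for x unfolding degree_def by simp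
  have DS: "?D x = s" if "x \<in> S" for x
    unfolding real_degree sum_neighbours_S[OF that] s_def by simp
  have DA: "?D x = da" if "x \<in> A" for x
    unfolding real_degree sum_neighbours_A[OF that] da_def by simp
  have DB: "?D x = db" if "x \<in> B" for x
    using swapped.sum_neighbours_A[OF that, of "\<lambda>_. 1"]
    unfolding degree_def join_graph_swap[of V A B] S_swapped db_def by simp
  let ?in = "\<lambda>x. \<Sum>y\<in>neighbours V ?G x. abc_weight (?D x) (?D y)"
  have "?in x = (?k - 1) * abc_weight s s + ?a * abc_weight s da + ?b * abc_weight s db"
    if x: "x \<in> S" for x
    unfolding sum_neighbours_S[OF x] using DS[OF x] DS DA DB
    by (simp add: algebra_simps)
  moreover have "?in x = ?k * abc_weight da s + (?a - 1) * abc_weight da da" if x: "x \<in> A" for x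
    unfolding sum_neighbours_A[OF x] using DA[OF x] DS DA
    by (simp add: algebra_simps)
  moreover have "?in x = ?k * abc_weight db s + (?b - 1) * abc_weight db db" if x: "x \<in> B" for x
    unfolding join_graph_swap[of V A B] swapped.sum_neighbours_A[OF x] S_swapped
    using DB[OF x] DS DB unfolding join_graph_swap[of V A B]
    by (simp add: algebra_simps)
  ultimately have "ABC2 V ?G = ?k * ((?k - 1) * abc_weight s s + ?a * abc_weight s da + ?b * abc_weight s db)
      + ?a * (?k * abc_weight da s + (?a - 1) * abc_weight da da)
      + ?b * (?k * abc_weight db s + (?b - 1) * abc_weight db db)"
    unfolding ABC2_def sum_blocks by simp
  also have "\<dots> = join_abc (card S) (card A) (card B)"
    unfolding join_abc_def Let_def block_abc_def s_def[symmetric] da_def[symmetric] db_def[symmetric]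
    using pos by (simp add: sep_weight_eq_abc_weight clique_weight_eq_abc_weight abc_weight_commute
        da_def db_def algebra_simps)
  finally show ?thesis .
qed

lemma join_abc_commute: "join_abc k a b = join_abc k b a"
  unfolding join_abc_def Let_def by (simp add: algebra_simps)

lemma join_abc_less:
  assumes k: "k \<ge> 1" and a: "a \<ge> 2" and b: "b \<ge> 2"
  shows "join_abc k a b < join_abc k 1 (a + b - 1)"
proof -
  have K: "real k \<ge> 1" and s: "real k + real a + real b - 1 > 2" using k a b by simp_all
  have "block_abc (real k) s (real k + real a - 1) + block_abc (real k) s (real k + real b - 1)
      < block_abc (real k) s (real k) + block_abc (real k) s (real k + real a + real b - 2)"
    if s: "s > 2" for s
  proof (cases "a \<le> b")
    case True
    then show ?thesis using block_abc_convex_less[OF K s, of "real a" "real b"] a by simp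
  next
    case False
    then show ?thesis using block_abc_convex_less[OF K s, of "real b" "real a"] b by (simp add: algebra_simps)
  qed
  from this[OF s] show ?thesis
    unfolding join_abc_def Let_def using a by (simp add: of_nat_diff algebra_simps)
qed

lemma join_abc_le:
  assumes k: "k \<ge> 1" and a: "a \<ge> 1" and b: "b \<ge> 1"
  shows "join_abc k a b \<le> join_abc k 1 (a + b - 1)"
proof -
  consider "a = 1" | "b = 1" | "a \<ge> 2" "b \<ge> 2" using a b by linarith
  then show ?thesis
  proof cases
    case 2
    then show ?thesis using join_abc_commute by simp
  next
    case 3
    then show ?thesis using join_abc_less[OF k] by (simp add: less_imp_le)
  qed simp
qed

lemma (in two_blocks) ABC2_join_graph_le_singleton:
  assumes x: "x \<in> A" and B_nonempty: "B \<noteq> {}" and k: "card S \<ge> 1"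
  shows "ABC2 V (join_graph V A B) \<le> ABC2 V (join_graph V {x} (A \<union> B - {x}))"
    and "card A \<ge> 2 \<Longrightarrow> card B \<ge> 2 \<Longrightarrow>
      ABC2 V (join_graph V A B) < ABC2 V (join_graph V {x} (A \<union> B - {x}))"
proof -
  interpret merged: two_blocks V "{x}" "A \<union> B - {x}" using finite_V A_subset B_subset x
    by unfold_locales auto
  have S_merged: "V - {x} - (A \<union> B - {x}) = S" using x by auto
  have a: "card A \<ge> 1" and b: "card B \<ge> 1"
    using x B_nonempty finite_blocks by (auto simp: Suc_le_eq card_gt_0_iff)
  have "card (A \<union> B - {x}) = card A + card B - 1"
    using x finite_blocks disjoint by (simp add: card_Un_disjoint)
  then have merged: "ABC2 V (join_graph V {x} (A \<union> B - {x})) = join_abc (card S) 1 (card A + card B - 1)"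
    using merged.ABC2_join_graph k a b unfolding S_merged by simp
  show "ABC2 V (join_graph V A B) \<le> ABC2 V (join_graph V {x} (A \<union> B - {x}))"
    unfolding merged ABC2_join_graph[OF k a b] using join_abc_le[OF k a b] .
  show "ABC2 V (join_graph V A B) < ABC2 V (join_graph V {x} (A \<union> B - {x}))"
    if "card A \<ge> 2" "card B \<ge> 2"
    unfolding merged ABC2_join_graph[OF k a b] using join_abc_less[OF k that] .
qed

section \<open>Vertex connectivity\<close>

lemma vertex_connectivity_attained:
  "\<exists>S\<subseteq>V. card S = vertex_connectivity V E \<and> (\<not> connected_on (V - S) E \<or> card (V - S) \<le> 1)"
proof -
  have "V \<subseteq> V \<and> card V = card V \<and> (\<not> connected_on (V - V) E \<or> card (V - V) \<le> 1)" by simp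
  then show ?thesis unfolding vertex_connectivity_def by (rule LeastI_ex[OF exI, OF exI])
qed

lemma vertex_connectivity_le:
  "S \<subseteq> V \<Longrightarrow> \<not> connected_on (V - S) E \<or> card (V - S) \<le> 1 \<Longrightarrow> vertex_connectivity V E \<le> card S"
  unfolding vertex_connectivity_def by (rule Least_le) blast

lemma connected_on_if_less_vertex_connectivity:
  assumes "S \<subseteq> V" "card S < vertex_connectivity V E"
  shows "connected_on (V - S) E" "card (V - S) \<ge> 2"
proof -
  have "\<not> (\<not> connected_on (V - S) E \<or> card (V - S) \<le> 1)"
    using vertex_connectivity_le[OF assms(1), of E] assms(2) by (meson not_le)
  then show "connected_on (V - S) E" "card (V - S) \<ge> 2" by auto
qed

lemma vertex_connectivity_less_card:
  assumes "finite V" "V \<noteq> {}"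
  shows "vertex_connectivity V E < card V"
proof -
  obtain x where x: "x \<in> V" using assms(2) by blast
  have "V - (V - {x}) = {x}" using x by auto
  then have "vertex_connectivity V E \<le> card (V - {x})"
    by (intro vertex_connectivity_le) simp_all
  moreover have "card V > 0" using x assms(1) card_gt_0_iff by blast
  ultimately show ?thesis using x assms(1) by simp
qed

lemma rtranclp_stays_in:
  assumes "(\<lambda>x y. E x y \<and> x \<in> W \<and> y \<in> W)\<^sup>*\<^sup>* x y" "x \<in> C"
    and "\<And>z w. z \<in> C \<Longrightarrow> w \<in> W \<Longrightarrow> E z w \<Longrightarrow> w \<in> C"
  shows "y \<in> C"
  using assms(1,2) by (induction rule: rtranclp_induct) (use assms(3) in blast)+

lemma connected_on_star:
  assumes "c \<in> W" and "\<And>w. w \<in> W \<Longrightarrow> w \<noteq> c \<Longrightarrow> E c w \<and> E w c"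
  shows "connected_on W E"
  unfolding connected_on_def
proof (intro conjI ballI)
  let ?r = "\<lambda>x y. E x y \<and> x \<in> W \<and> y \<in> W"
  fix u v assume "u \<in> W" "v \<in> W"
  then have "?r\<^sup>*\<^sup>* u c" "?r\<^sup>*\<^sup>* c v"
    using assms by (auto intro: r_into_rtranclp simp del: r_into_rtranclp)
  then show "?r\<^sup>*\<^sup>* u v" by (rule rtranclp_trans)
qed (use assms in auto)

lemma connected_on_if_reachable:
  assumes sym: "\<And>u v. E u v \<Longrightarrow> E v u" and x: "x \<in> W"
    and reach: "\<And>z. z \<in> W \<Longrightarrow> (\<lambda>u v. E u v \<and> u \<in> W \<and> v \<in> W)\<^sup>*\<^sup>* x z"
  shows "connected_on W E"
  unfolding connected_on_def
proof (intro conjI ballI)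
  let ?r = "\<lambda>u v. E u v \<and> u \<in> W \<and> v \<in> W"
  have "symp ?r" using sym by (auto intro: sympI)
  then have "symp ?r\<^sup>*\<^sup>*" by (rule symp_rtranclp)
  fix u v assume "u \<in> W" "v \<in> W"
  from sympD[OF \<open>symp ?r\<^sup>*\<^sup>*\<close> reach[OF \<open>u \<in> W\<close>]] reach[OF \<open>v \<in> W\<close>] show "?r\<^sup>*\<^sup>* u v"
    by (rule rtranclp_trans)
qed (use x in auto)

lemma degree_ge_1_if_vertex_connectivity_pos:
  assumes sg: "simple_graph V E" and k: "vertex_connectivity V E \<ge> 1" and x: "x \<in> V"
  shows "degree V E x \<ge> 1"
proof -
  have conn: "connected_on V E" and two: "card V \<ge> 2"
    using connected_on_if_less_vertex_connectivity[of "{}" V E] k by simp_all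
  have "card (V - {x}) \<ge> 1" using two x simple_graph_finite[OF sg] by simp
  then have "V - {x} \<noteq> {}" by (metis card.empty not_one_le_zero)
  then obtain y where y: "y \<in> V" "y \<noteq> x" by blast
  let ?r = "\<lambda>x y. E x y \<and> x \<in> V \<and> y \<in> V"
  have "?r\<^sup>*\<^sup>* x y" using conn x y unfolding connected_on_def by simp
  then obtain z where "?r x z" using y(2) by (cases rule: converse_rtranclpE) auto
  then show ?thesis using degree_pos[OF sg] by blast
qed

lemma vertex_connectivity_join_singleton:
  assumes fin: "finite V" and x: "x \<in> V" and B_V: "B \<subseteq> V" and x_B: "x \<notin> B"
  shows "vertex_connectivity V (join_graph V {x} B) = card (V - {x} - B)"
proof (rule antisym)
  let ?G = "join_graph V {x} B" and ?S = "V - {x} - B"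
  interpret two_blocks V "{x}" B using assms by unfold_locales auto
  show "vertex_connectivity V ?G \<le> card ?S"
  proof (rule vertex_connectivity_le)
    have W: "V - ?S = {x} \<union> B" using x B_V by auto
    show "\<not> connected_on (V - ?S) ?G \<or> card (V - ?S) \<le> 1"
    proof (cases "B = {}")
      case False
      then obtain y where y: "y \<in> B" by blast
      have "y \<in> {x}" if "(\<lambda>u v. ?G u v \<and> u \<in> V - ?S \<and> v \<in> V - ?S)\<^sup>*\<^sup>* x y"
        by (rule rtranclp_stays_in[OF that]) (auto simp: W join_graph_def)
      then show ?thesis unfolding connected_on_def W using y x_B by blast
    qed (use W in simp)
  qed auto
  show "card ?S \<le> vertex_connectivity V ?G"
  proof (rule ccontr)
    assume less: "\<not> card ?S \<le> vertex_connectivity V ?G"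
    obtain T where T: "T \<subseteq> V" "card T = vertex_connectivity V ?G"
      "\<not> connected_on (V - T) ?G \<or> card (V - T) \<le> 1"
      using vertex_connectivity_attained[of V ?G] by blast
    have finT: "finite T" using T(1) fin finite_subset by blast
    obtain c where c: "c \<in> ?S" "c \<notin> T"
      using less T(2) card_mono[OF finT, of ?S] by auto
    have "connected_on (V - T) ?G"
      by (rule connected_on_star[of c]) (use c in \<open>auto simp: join_graph_def\<close>)
    moreover have "card (V - T) \<ge> 2"
      using card_V less T(1,2) finT by (simp add: card_Diff_subset)
    ultimately show False using T(3) by simp
  qed
qed

lemma minimum_separator_split:
  assumes sg: "simple_graph V E" and less: "vertex_connectivity V E < card V"
  obtains A B where "two_blocks V A B" "A \<noteq> {}" "card (V - A - B) = vertex_connectivity V E"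
    "B = {} \<Longrightarrow> card A = 1" "\<And>u v. E u v \<Longrightarrow> join_graph V A B u v"
proof -
  have fin: "finite V" using simple_graph_finite[OF sg] .
  obtain T where T: "T \<subseteq> V" "card T = vertex_connectivity V E"
    "\<not> connected_on (V - T) E \<or> card (V - T) \<le> 1"
    using vertex_connectivity_attained[of V E] by blast
  let ?W = "V - T"
  let ?r = "\<lambda>u v. E u v \<and> u \<in> ?W \<and> v \<in> ?W"
  have "?W \<noteq> {}"
  proof
    assume "?W = {}"
    then have "card V \<le> card T" using fin T(1) by (simp add: card_mono finite_subset)
    then show False using less T(2) by simp
  qed
  then obtain x where x: "x \<in> ?W" by blast
  define A where "A = {z \<in> ?W. ?r\<^sup>*\<^sup>* x z}"
  define B where "B = ?W - A"
  have blocks: "two_blocks V A B" using fin unfolding A_def B_def by unfold_locales auto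
  have x_A: "x \<in> A" unfolding A_def using x by simp
  have separator: "V - A - B = T" using T(1) unfolding A_def B_def by auto
  have closed: "w \<in> A" if "z \<in> A" "w \<in> ?W" "E z w" for z w
    using that rtranclp.rtrancl_into_rtrancl[of ?r x z w] unfolding A_def by auto
  have "card A = 1" if "B = {}"
  proof -
    have "A = ?W" using \<open>B = {}\<close> unfolding B_def A_def by auto
    then have reach: "?r\<^sup>*\<^sup>* x z" if "z \<in> ?W" for z using that unfolding A_def by blast
    have "connected_on ?W E"
      by (rule connected_on_if_reachable[OF _ x reach]) (rule simple_graph_sym[OF sg])
    then have "card A \<le> 1" using T(3) \<open>A = ?W\<close> by simp
    moreover have "card A \<noteq> 0" using x_A fin unfolding A_def by auto
    ultimately show ?thesis by simp
  qed
  moreover have "join_graph V A B u v" if "E u v" for u v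
    using closed[OF _ _ that] closed[OF _ _ simple_graph_sym[OF sg that]]
      simple_graph_edge_in[OF sg that] simple_graph_irrefl[OF sg, of u] that
    unfolding join_graph_def B_def by blast
  ultimately show ?thesis using that blocks x_A separator T(2) by blast
qed

section \<open>The extremal graph\<close>

lemma bij_betw_add_left: "bij_betw (\<lambda>i. k + i) {0..<m} {k..<k + m :: nat}"
  unfolding bij_betw_def inj_on_def by (auto simp: image_iff)

lemma obtain_Knk_numbering:
  assumes "finite V" and x: "x \<in> V" and B: "B \<subseteq> V" "x \<notin> B"
  defines "S \<equiv> V - {x} - B"
  obtains f where "bij_betw f V {0..<card V}" "f x = card V - 1"
    "\<And>z. z \<in> S \<Longrightarrow> f z < card S" "\<And>z. z \<in> B \<Longrightarrow> card S \<le> f z \<and> f z < card V - 1"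
proof -
  interpret two_blocks V "{x}" B using assms by unfold_locales auto
  have n: "card V = card S + 1 + card B" using card_V unfolding S_def by simp
  obtain g where g: "bij_betw g S {0..<card S}" using ex_bij_betw_finite_nat finite_blocks(1) S_def by blast
  obtain h where h: "bij_betw h B {0..<card B}" using ex_bij_betw_finite_nat finite_blocks(3) by blast
  define f where "f z = (if z \<in> S then g z else if z = x then card V - 1 else card S + h z)" for z
  have f_S: "bij_betw f S {0..<card S}" using g by (rule bij_betw_cong[THEN iffD1, rotated]) (simp add: f_def)
  have "bij_betw ((\<lambda>i. card S + i) \<circ> h) B {card S..<card S + card B}"
    by (rule bij_betw_trans[OF h bij_betw_add_left])
  then have f_B: "bij_betw f B {card S..<card S + card B}"
    by (rule bij_betw_cong[THEN iffD1, rotated]) (use B in \<open>auto simp: f_def S_def\<close>)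
  have f_x: "bij_betw f {x} {card V - 1}" unfolding f_def S_def by (simp add: bij_betw_def)
  have "bij_betw f (S \<union> ({x} \<union> B)) ({0..<card S} \<union> ({card V - 1} \<union> {card S..<card S + card B}))"
    using n by (intro bij_betw_combine f_S f_x f_B) (auto simp: S_def)
  moreover have "S \<union> ({x} \<union> B) = V" using x B unfolding S_def by auto
  moreover have "{0..<card S} \<union> ({card V - 1} \<union> {card S..<card S + card B}) = {0..<card V}" using n by auto
  ultimately have "bij_betw f V {0..<card V}" by simp
  moreover have "f z < card S" if "z \<in> S" for z using f_S that bij_betwE by fastforce
  moreover have "card S \<le> f z \<and> f z < card V - 1" if "z \<in> B" for z using f_B that n bij_betwE by fastforce
  ultimately show ?thesis using that unfolding f_def S_def by simp
qed

lemma join_graph_singleton_iso_Knk: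
  assumes "finite V" and x: "x \<in> V" and B: "B \<subseteq> V" "x \<notin> B"
  shows "graph_iso V (join_graph V {x} B) {0..<card V} (Knk (card V) (card (V - {x} - B)))"
proof -
  obtain f where f: "bij_betw f V {0..<card V}" "f x = card V - 1"
    "\<And>z. z \<in> V - {x} - B \<Longrightarrow> f z < card (V - {x} - B)"
    "\<And>z. z \<in> B \<Longrightarrow> card (V - {x} - B) \<le> f z \<and> f z < card V - 1"
    using obtain_Knk_numbering[OF assms] by blast
  have "join_graph V {x} B u v \<longleftrightarrow> Knk (card V) (card (V - {x} - B)) (f u) (f v)"
    if "u \<in> V" "v \<in> V" for u v
  proof -
    have inj: "f w = f w' \<longleftrightarrow> w = w'" if "w \<in> V" "w' \<in> V" for w w'
      using f(1) that by (metis bij_betw_iff_bijections)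
    have "f u < card V" "f v < card V" using f(1) that bij_betwE by fastforce+
    moreover have "u \<in> V - {x} - B \<or> u = x \<or> u \<in> B" "v \<in> V - {x} - B \<or> v = x \<or> v \<in> B"
      using that by auto
    ultimately show ?thesis
      unfolding join_graph_def Knk_def using that f(2-4) B inj[OF that] inj[OF _ x] x
      by (elim disjE) fastforce+
  qed
  then show ?thesis unfolding graph_iso_def using f(1) by blast
qed

lemma (in two_blocks) join_graph_iso_Knk:
  assumes "card A = 1 \<or> card B = 1"
  shows "graph_iso V (join_graph V A B) {0..<card V} (Knk (card V) (card S))"
  using assms
proof
  assume "card A = 1"
  then obtain z where "A = {z}" by (auto simp: card_Suc_eq)
  then show ?thesis using join_graph_singleton_iso_Knk finite_V A_subset B_subset disjoint by auto
next
  assume "card B = 1"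
  then obtain z where z: "B = {z}" by (auto simp: card_Suc_eq)
  have "V - {z} - A = S" using z by auto
  then show ?thesis unfolding join_graph_swap[of V A B]
    using join_graph_singleton_iso_Knk[of V z A] finite_V A_subset B_subset disjoint z by auto
qed

lemma (in two_blocks) join_graph_if_ABC2_maximal:
  assumes sg: "simple_graph V E" and sub: "\<And>u v. E u v \<Longrightarrow> join_graph V A B u v"
    and deg: "\<And>x. x \<in> V \<Longrightarrow> degree V E x \<ge> 1"
    and x: "x \<in> A" and k: "card S \<ge> 1" and B_empty: "B = {} \<Longrightarrow> card A = 1"
    and maximal: "ABC2 V (join_graph V {x} (A \<union> B - {x})) \<le> ABC2 V E"
  shows "E = join_graph V A B" and "card A = 1 \<or> card B = 1"
proof -
  let ?K = "join_graph V {x} (A \<union> B - {x})"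
  have "ABC2 V (join_graph V A B) \<le> ABC2 V ?K"
  proof (cases "B = {}")
    case True
    then have "A = {x}" using B_empty x by (metis card_1_singletonE singletonD)
    then show ?thesis using True by simp
  qed (use ABC2_join_graph_le_singleton(1)[OF x] k in simp)
  then show E: "E = join_graph V A B"
    using ABC2_strict_mono[OF sg simple_graph_join_graph[OF finite_V] sub deg] maximal by fastforce
  show "card A = 1 \<or> card B = 1"
  proof (rule ccontr)
    assume neither: "\<not> (card A = 1 \<or> card B = 1)"
    then have "B \<noteq> {}" using B_empty by blast
    then have "card B \<noteq> 0" using finite_blocks by simp
    moreover have "card A \<noteq> 0" using x finite_blocks by auto
    ultimately have "card A \<ge> 2" "card B \<ge> 2" using neither by presburger+
    then have "ABC2 V (join_graph V A B) < ABC2 V ?K"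
      using ABC2_join_graph_le_singleton(2)[OF x \<open>B \<noteq> {}\<close> k] by simp
    then show False using E maximal by simp
  qed
qed

theorem corollary2:
  fixes V :: "'a set" and E :: "'a \<Rightarrow> 'a \<Rightarrow> bool" and n k :: nat
  assumes "k \<ge> 1"
    and "simple_graph V E" and "card V = n" and "vertex_connectivity V E = k"
    and "\<forall>(V' :: 'a set) E'. simple_graph V' E' \<and> card V' = n \<and> vertex_connectivity V' E' = k
           \<longrightarrow> ABC V' E' \<le> ABC V E"
  shows "graph_iso V E {0..<n} (Knk n k)"
proof -
  note k = assms(1) and sg = assms(2) and n = assms(3) and vc = assms(4) and maximal = assms(5)
  have fin: "finite V" using simple_graph_finite[OF sg] .
  have deg: "degree V E x \<ge> 1" if "x \<in> V" for x
    using degree_ge_1_if_vertex_connectivity_pos[OF sg _ that] k vc by simp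
  have "card V \<ge> 2" using connected_on_if_less_vertex_connectivity[of "{}" V E] k vc by simp
  then have "vertex_connectivity V E < card V" using vertex_connectivity_less_card[OF fin] by force
  then obtain A B where blocks: "two_blocks V A B" and "A \<noteq> {}" and S: "card (V - A - B) = k"
    and B_empty: "B = {} \<Longrightarrow> card A = 1" and sub: "\<And>u v. E u v \<Longrightarrow> join_graph V A B u v"
    using minimum_separator_split[OF sg] vc by metis
  interpret two_blocks V A B by (rule blocks)
  obtain x where x: "x \<in> A" using \<open>A \<noteq> {}\<close> by blast
  let ?K = "join_graph V {x} (A \<union> B - {x})"
  have "V - {x} - (A \<union> B - {x}) = S" using x by auto
  then have "vertex_connectivity V ?K = k"
    using vertex_connectivity_join_singleton[OF finite_V, of x "A \<union> B - {x}"] x A_subset B_subset S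
    by auto
  then have "ABC2 V ?K \<le> ABC2 V E"
    using maximal[rule_format, of V ?K] simple_graph_join_graph[OF finite_V] n
    by (simp add: ABC_eq_half_ABC2[OF fin])
  then have "E = join_graph V A B" "card A = 1 \<or> card B = 1"
    using join_graph_if_ABC2_maximal[OF sg sub deg x] S k B_empty by simp_all
  then show ?thesis using join_graph_iso_Knk S n by simp
qed

end
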